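(* Let $G$ be the alternating group $A_4$ on $4$ elements (a group of order $12$). Then there do not exist subsets $A_1, A_2, A_3 \subseteq G$ with $\mathrm{card}(A_1)=2$, $\mathrm{card}(A_2)=3$, $\mathrm{card}(A_3)=2$ such that the multiplication map $A_1\times A_2\times A_3\to G$, $(a_1,a_2,a_3)\mapsto a_1a_2a_3$, is a bijection. *)

theory Defs
  imports "HOL-Algebra.Sym_Groups"
begin

end

(*
  Translating the three factors, one may assume A1 = {1, x}, A2 = {1, u, v} and A3 = {1, y}.
  If x had order 3, then x^2 = x^-1 would factor as a1 a2 a3, and this would give a second
  factorisation either of 1 (when a1 = 1) or of x (when a1 = x); symmetrically for y.
  Since every element of A4 has order 1, 2 or 3, both x and y are involutions, and a finite
  check in a Cayley table of A4 (verified against the permutations) shows that the twelve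
  products x^i a y^j with a in {1, u, v} then cannot be pairwise distinct.
*)

theory Submission
  imports Defs
begin

section \<open>Exact factorizations\<close>

definition exact_factorization :: "('a, 'b) monoid_scheme \<Rightarrow> 'a set \<Rightarrow> 'a set \<Rightarrow> 'a set \<Rightarrow> bool"
  where "exact_factorization G A B C \<longleftrightarrow>
    A \<subseteq> carrier G \<and> B \<subseteq> carrier G \<and> C \<subseteq> carrier G \<and>
    bij_betw (\<lambda>(a, b, c). a \<otimes>\<^bsub>G\<^esub> b \<otimes>\<^bsub>G\<^esub> c) (A \<times> B \<times> C) (carrier G)"

context group
begin

lemma inv_mult_cancel_left [simp]: "x \<in> carrier G \<Longrightarrow> y \<in> carrier G \<Longrightarrow> inv x \<otimes> (x \<otimes> y) = y"
  by (simp add: m_assoc [symmetric])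

lemma mult_inv_cancel_left [simp]: "x \<in> carrier G \<Longrightarrow> y \<in> carrier G \<Longrightarrow> x \<otimes> (inv x \<otimes> y) = y"
  by (simp add: m_assoc [symmetric])

lemma exact_factorization_eqD:
  assumes "exact_factorization G A B C"
    and "a \<in> A" "b \<in> B" "c \<in> C" "a' \<in> A" "b' \<in> B" "c' \<in> C"
    and "a \<otimes> b \<otimes> c = a' \<otimes> b' \<otimes> c'"
  shows "a = a' \<and> b = b' \<and> c = c'"
  using assms inj_onD[of "\<lambda>(a, b, c). a \<otimes> b \<otimes> c" "A \<times> B \<times> C" "(a, b, c)" "(a', b', c')"]
  by (auto simp: exact_factorization_def bij_betw_def)

lemma exact_factorization_decompose:
  assumes "exact_factorization G A B C" "g \<in> carrier G"
  obtains a b c where "a \<in> A" "b \<in> B" "c \<in> C" "g = a \<otimes> b \<otimes> c"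
proof -
  from assms have "g \<in> (\<lambda>(a, b, c). a \<otimes> b \<otimes> c) ` (A \<times> B \<times> C)"
    by (simp add: exact_factorization_def bij_betw_def)
  then show thesis using that by auto
qed

lemma exact_factorization_translate:
  assumes fact: "exact_factorization G A B C"
    and g: "g \<in> carrier G" and h: "h \<in> carrier G" and k: "k \<in> carrier G"
  shows "exact_factorization G ((\<lambda>a. g \<otimes> a) ` A) ((\<lambda>b. b \<otimes> inv h) ` B) ((\<lambda>c. h \<otimes> c \<otimes> k) ` C)"
proof -
  let ?f = "\<lambda>(a, b, c). a \<otimes> b \<otimes> c"
  let ?\<tau> = "map_prod (\<lambda>a. g \<otimes> a) (map_prod (\<lambda>b. b \<otimes> inv h) (\<lambda>c. h \<otimes> c \<otimes> k))"
  let ?\<sigma> = "\<lambda>z. g \<otimes> z \<otimes> k"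
  from fact have sub: "A \<subseteq> carrier G" "B \<subseteq> carrier G" "C \<subseteq> carrier G"
    and f: "bij_betw ?f (A \<times> B \<times> C) (carrier G)"
    by (auto simp: exact_factorization_def)
  have \<tau>: "bij_betw ?\<tau> (A \<times> B \<times> C)
      ((\<lambda>a. g \<otimes> a) ` A \<times> (\<lambda>b. b \<otimes> inv h) ` B \<times> (\<lambda>c. h \<otimes> c \<otimes> k) ` C)"
    by (intro bij_betw_map_prod inj_on_imp_bij_betw inj_onI) (use sub g h k in \<open>auto simp: subsetD\<close>)
  have \<sigma>: "bij_betw ?\<sigma> (carrier G) (carrier G)"
    by (rule bij_betw_byWitness[where f' = "\<lambda>z. inv g \<otimes> z \<otimes> inv k"]) (use g k in \<open>auto simp: m_assoc\<close>)
  have "bij_betw (?\<sigma> \<circ> ?f) (A \<times> B \<times> C) (carrier G)"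
    using bij_betw_trans[OF f \<sigma>] .
  moreover have "(?\<sigma> \<circ> ?f) p = (?f \<circ> ?\<tau>) p" if "p \<in> A \<times> B \<times> C" for p
    using that sub g h k by (auto simp: m_assoc subsetD)
  ultimately have "bij_betw (?f \<circ> ?\<tau>) (A \<times> B \<times> C) (carrier G)"
    using bij_betw_cong by blast
  then show ?thesis
    using bij_betw_comp_iff[OF \<tau>] sub g h k by (auto simp: exact_factorization_def)
qed

lemma exact_factorization_normalize:
  assumes fact: "exact_factorization G A B C" and "a \<in> A" "b \<in> B" "c \<in> C"
  obtains A' B' C' where "exact_factorization G A' B' C'" "\<one> \<in> A'" "\<one> \<in> B'" "\<one> \<in> C'"
    "card A' = card A" "card B' = card B" "card C' = card C"
proof -
  from fact have sub: "A \<subseteq> carrier G" "B \<subseteq> carrier G" "C \<subseteq> carrier G"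
    by (auto simp: exact_factorization_def)
  with assms have abc: "a \<in> carrier G" "b \<in> carrier G" "c \<in> carrier G" by auto
  define A' where "A' = (\<lambda>x. inv a \<otimes> x) ` A"
  define B' where "B' = (\<lambda>x. x \<otimes> inv b) ` B"
  define C' where "C' = (\<lambda>x. b \<otimes> x \<otimes> (inv c \<otimes> inv b)) ` C"
  have "exact_factorization G A' B' C'"
    unfolding A'_def B'_def C'_def using fact abc by (intro exact_factorization_translate) auto
  moreover have "\<one> \<in> A'"
    unfolding A'_def using assms abc by (intro image_eqI [where x = a]) simp_all
  moreover have "\<one> \<in> B'"
    unfolding B'_def using assms abc by (intro image_eqI [where x = b]) simp_all
  moreover have "\<one> \<in> C'"
    unfolding C'_def using assms abc by (intro image_eqI [where x = c]) (simp_all add: m_assoc)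
  moreover have "card A' = card A" "card B' = card B" "card C' = card C"
    unfolding A'_def B'_def C'_def
    by (intro card_image inj_onI; use sub abc in \<open>auto simp: subsetD\<close>)+
  ultimately show thesis using that by blast
qed

lemma exact_factorization_2_3_2_normal_form:
  assumes fact: "exact_factorization G A B C" and "card A = 2" "card B = 3" "card C = 2"
  obtains x u v y where "exact_factorization G {\<one>, x} {\<one>, u, v} {\<one>, y}"
    "x \<noteq> \<one>" "u \<noteq> \<one>" "v \<noteq> \<one>" "u \<noteq> v" "y \<noteq> \<one>"
proof -
  from assms have "A \<noteq> {}" "B \<noteq> {}" "C \<noteq> {}" by auto
  then obtain a b c where "a \<in> A" "b \<in> B" "c \<in> C" by blast
  with fact obtain A' B' C' where fact': "exact_factorization G A' B' C'"
    and one: "\<one> \<in> A'" "\<one> \<in> B'" "\<one> \<in> C'"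
    and "card A' = card A" "card B' = card B" "card C' = card C"
    by (rule exact_factorization_normalize)
  with assms have "card (A' - {\<one>}) = 1" "card (B' - {\<one>}) = 2" "card (C' - {\<one>}) = 1"
    by (simp_all add: card_Diff_singleton)
  then obtain x u v y where x: "A' - {\<one>} = {x}" and uv: "B' - {\<one>} = {u, v}" "u \<noteq> v"
    and y: "C' - {\<one>} = {y}"
    by (metis One_nat_def card_1_singleton_iff card_2_iff)
  from x y uv(1) have "x \<noteq> \<one>" "u \<noteq> \<one>" "v \<noteq> \<one>" "y \<noteq> \<one>" by auto
  moreover from x y uv(1) one have "A' = {\<one>, x}" "B' = {\<one>, u, v}" "C' = {\<one>, y}" by auto
  ultimately show thesis using that[of x u v y] fact' uv(2) by simp
qed

lemma exact_factorization_cube_ne_one_left: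
  assumes fact: "exact_factorization G {\<one>, x} B C" and B: "\<one> \<in> B" and C: "\<one> \<in> C"
    and "x \<noteq> \<one>"
  shows "x \<otimes> x \<otimes> x \<noteq> \<one>"
proof
  assume cube: "x \<otimes> x \<otimes> x = \<one>"
  from fact have x: "x \<in> carrier G" and sub: "B \<subseteq> carrier G" "C \<subseteq> carrier G"
    by (auto simp: exact_factorization_def)
  have A: "\<one> \<in> {\<one>, x}" "x \<in> {\<one>, x}" by simp_all
  from x have "x \<otimes> x \<in> carrier G" by simp
  then obtain a b c where a: "a \<in> {\<one>, x}" and bc: "b \<in> B" "c \<in> C" and sq: "x \<otimes> x = a \<otimes> b \<otimes> c"
    by (rule exact_factorization_decompose[OF fact])
  from bc sub have b: "b \<in> carrier G" and c: "c \<in> carrier G" by auto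
  from a consider "a = \<one>" | "a = x" by blast
  then have "x = \<one>"
  proof cases
    case 1
    with sq b c have "b \<otimes> c = x \<otimes> x" by simp
    with x b c cube have "x \<otimes> b \<otimes> c = \<one> \<otimes> \<one> \<otimes> \<one>" by (simp add: m_assoc)
    from exact_factorization_eqD[OF fact A(2) bc A(1) B C this] show ?thesis by simp
  next
    case 2
    with sq x b c have "x \<otimes> \<one> \<otimes> \<one> = \<one> \<otimes> b \<otimes> c" by (simp add: m_assoc)
    from exact_factorization_eqD[OF fact A(2) B C A(1) bc this] show ?thesis by simp
  qed
  with \<open>x \<noteq> \<one>\<close> show False ..
qed

lemma exact_factorization_cube_ne_one_right:
  assumes fact: "exact_factorization G A B {\<one>, y}" and A: "\<one> \<in> A" and B: "\<one> \<in> B"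
    and "y \<noteq> \<one>"
  shows "y \<otimes> y \<otimes> y \<noteq> \<one>"
proof
  assume cube: "y \<otimes> y \<otimes> y = \<one>"
  from fact have y: "y \<in> carrier G" and sub: "A \<subseteq> carrier G" "B \<subseteq> carrier G"
    by (auto simp: exact_factorization_def)
  have C: "\<one> \<in> {\<one>, y}" "y \<in> {\<one>, y}" by simp_all
  from y have "y \<otimes> y \<in> carrier G" by simp
  then obtain a b c where ab: "a \<in> A" "b \<in> B" and c: "c \<in> {\<one>, y}" and sq: "y \<otimes> y = a \<otimes> b \<otimes> c"
    by (rule exact_factorization_decompose[OF fact])
  from ab sub have a: "a \<in> carrier G" and b: "b \<in> carrier G" by auto
  from c consider "c = \<one>" | "c = y" by blast
  then have "y = \<one>"
  proof cases
    case 1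
    with sq a b have "a \<otimes> b = y \<otimes> y" by simp
    with cube have "a \<otimes> b \<otimes> y = \<one> \<otimes> \<one> \<otimes> \<one>" by simp
    from exact_factorization_eqD[OF fact ab C(2) A B C(1) this] show ?thesis by simp
  next
    case 2
    with sq y a b have "\<one> \<otimes> \<one> \<otimes> y = a \<otimes> b \<otimes> \<one>" by simp
    from exact_factorization_eqD[OF fact A B C(2) ab C(1) this] show ?thesis by simp
  qed
  with \<open>y \<noteq> \<one>\<close> show False ..
qed

lemma exact_factorization_distinct_products:
  assumes fact: "exact_factorization G {\<one>, x} {\<one>, u, v} {\<one>, y}"
    and "x \<noteq> \<one>" "u \<noteq> \<one>" "v \<noteq> \<one>" "u \<noteq> v" "y \<noteq> \<one>"
  shows "distinct [\<one>, x, y, x \<otimes> y, u, x \<otimes> u, u \<otimes> y, x \<otimes> u \<otimes> y,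
                   v, x \<otimes> v, v \<otimes> y, x \<otimes> v \<otimes> y]"
proof -
  let ?f = "\<lambda>(a, b, c). a \<otimes> b \<otimes> c"
  define T where "T = [(\<one>, \<one>, \<one>), (x, \<one>, \<one>), (\<one>, \<one>, y), (x, \<one>, y),
                       (\<one>, u, \<one>), (x, u, \<one>), (\<one>, u, y), (x, u, y),
                       (\<one>, v, \<one>), (x, v, \<one>), (\<one>, v, y), (x, v, y)]"
  from fact have carr: "x \<in> carrier G" "u \<in> carrier G" "v \<in> carrier G" "y \<in> carrier G"
    by (simp_all add: exact_factorization_def)
  from fact have inj: "inj_on ?f ({\<one>, x} \<times> {\<one>, u, v} \<times> {\<one>, y})"
    unfolding exact_factorization_def bij_betw_def by blast
  have "set T = {\<one>, x} \<times> {\<one>, u, v} \<times> {\<one>, y}" by (auto simp: T_def)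
  with inj have "inj_on ?f (set T)" by (simp only:)
  moreover have "distinct T" using assms(2-) by (simp add: T_def)
  ultimately have "distinct (map ?f T)" by (simp only: distinct_map)
  moreover have "map ?f T = [\<one>, x, y, x \<otimes> y, u, x \<otimes> u, u \<otimes> y, x \<otimes> u \<otimes> y,
                              v, x \<otimes> v, v \<otimes> y, x \<otimes> v \<otimes> y]"
    using carr by (simp add: T_def)
  ultimately show ?thesis by simp
qed

lemma exact_factorization_2_3_2_involutions:
  assumes fact: "exact_factorization G A B C" and "card A = 2" "card B = 3" "card C = 2"
    and order: "\<And>g. g \<in> carrier G \<Longrightarrow> g \<otimes> g = \<one> \<or> g \<otimes> g \<otimes> g = \<one>"
  obtains x y u v where "x \<in> carrier G" "y \<in> carrier G" "u \<in> carrier G" "v \<in> carrier G"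
    "x \<otimes> x = \<one>" "y \<otimes> y = \<one>"
    "distinct [\<one>, x, y, x \<otimes> y, u, x \<otimes> u, u \<otimes> y, x \<otimes> u \<otimes> y,
               v, x \<otimes> v, v \<otimes> y, x \<otimes> v \<otimes> y]"
proof -
  obtain x u v y where fact': "exact_factorization G {\<one>, x} {\<one>, u, v} {\<one>, y}"
    and ne: "x \<noteq> \<one>" "u \<noteq> \<one>" "v \<noteq> \<one>" "u \<noteq> v" "y \<noteq> \<one>"
    using exact_factorization_2_3_2_normal_form[OF assms(1-4)] .
  from fact' have carr: "x \<in> carrier G" "y \<in> carrier G" "u \<in> carrier G" "v \<in> carrier G"
    by (simp_all add: exact_factorization_def)
  have "x \<otimes> x = \<one>"
    using order[OF carr(1)] exact_factorization_cube_ne_one_left[OF fact'] ne by auto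
  moreover have "y \<otimes> y = \<one>"
    using order[OF carr(2)] exact_factorization_cube_ne_one_right[OF fact'] ne by auto
  ultimately show thesis
    using that carr exact_factorization_distinct_products[OF fact' ne] by simp
qed

end

section \<open>A Cayley table of the alternating group on four points\<close>

lemma permutes_eqI:
  assumes "p permutes S" "q permutes S" "\<And>i. i \<in> S \<Longrightarrow> p i = q i"
  shows "p = q"
  by (metis assms permutes_not_in ext)

datatype a4 = I | V12 | V13 | V14 | C123 | C132 | C124 | C142 | C134 | C143 | C234 | C243

fun a4_perm :: "a4 \<Rightarrow> nat \<Rightarrow> nat" where
  "a4_perm I = id"
| "a4_perm V12 = transpose 1 2 \<circ> transpose 3 4"
| "a4_perm V13 = transpose 1 3 \<circ> transpose 2 4"
| "a4_perm V14 = transpose 1 4 \<circ> transpose 2 3"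
| "a4_perm C123 = cycle_of_list [1, 2, 3]"
| "a4_perm C132 = cycle_of_list [1, 3, 2]"
| "a4_perm C124 = cycle_of_list [1, 2, 4]"
| "a4_perm C142 = cycle_of_list [1, 4, 2]"
| "a4_perm C134 = cycle_of_list [1, 3, 4]"
| "a4_perm C143 = cycle_of_list [1, 4, 3]"
| "a4_perm C234 = cycle_of_list [2, 3, 4]"
| "a4_perm C243 = cycle_of_list [2, 4, 3]"

primrec a4_mult :: "a4 \<Rightarrow> a4 \<Rightarrow> a4" (infixl "\<cdot>" 70) where
  "I \<cdot> y = y" |
  "V12 \<cdot> y = (case y of I \<Rightarrow> V12 | V12 \<Rightarrow> I | V13 \<Rightarrow> V14 | V14 \<Rightarrow> V13 | C123 \<Rightarrow> C243 | C132 \<Rightarrow> C143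
     | C124 \<Rightarrow> C234 | C142 \<Rightarrow> C134 | C134 \<Rightarrow> C142 | C143 \<Rightarrow> C132 | C234 \<Rightarrow> C124 | C243 \<Rightarrow> C123)" |
  "V13 \<cdot> y = (case y of I \<Rightarrow> V13 | V12 \<Rightarrow> V14 | V13 \<Rightarrow> I | V14 \<Rightarrow> V12 | C123 \<Rightarrow> C142 | C132 \<Rightarrow> C234
     | C124 \<Rightarrow> C143 | C142 \<Rightarrow> C123 | C134 \<Rightarrow> C243 | C143 \<Rightarrow> C124 | C234 \<Rightarrow> C132 | C243 \<Rightarrow> C134)" |
  "V14 \<cdot> y = (case y of I \<Rightarrow> V14 | V12 \<Rightarrow> V13 | V13 \<Rightarrow> V12 | V14 \<Rightarrow> I | C123 \<Rightarrow> C134 | C132 \<Rightarrow> C124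
     | C124 \<Rightarrow> C132 | C142 \<Rightarrow> C243 | C134 \<Rightarrow> C123 | C143 \<Rightarrow> C234 | C234 \<Rightarrow> C143 | C243 \<Rightarrow> C142)" |
  "C123 \<cdot> y = (case y of I \<Rightarrow> C123 | V12 \<Rightarrow> C134 | V13 \<Rightarrow> C243 | V14 \<Rightarrow> C142 | C123 \<Rightarrow> C132 | C132 \<Rightarrow> I
     | C124 \<Rightarrow> V13 | C142 \<Rightarrow> C143 | C134 \<Rightarrow> C234 | C143 \<Rightarrow> V14 | C234 \<Rightarrow> V12 | C243 \<Rightarrow> C124)" |
  "C132 \<cdot> y = (case y of I \<Rightarrow> C132 | V12 \<Rightarrow> C234 | V13 \<Rightarrow> C124 | V14 \<Rightarrow> C143 | C123 \<Rightarrow> I | C132 \<Rightarrow> C123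
     | C124 \<Rightarrow> C243 | C142 \<Rightarrow> V14 | C134 \<Rightarrow> V12 | C143 \<Rightarrow> C142 | C234 \<Rightarrow> C134 | C243 \<Rightarrow> V13)" |
  "C124 \<cdot> y = (case y of I \<Rightarrow> C124 | V12 \<Rightarrow> C143 | V13 \<Rightarrow> C132 | V14 \<Rightarrow> C234 | C123 \<Rightarrow> V14 | C132 \<Rightarrow> C134
     | C124 \<Rightarrow> C142 | C142 \<Rightarrow> I | C134 \<Rightarrow> V13 | C143 \<Rightarrow> C243 | C234 \<Rightarrow> C123 | C243 \<Rightarrow> V12)" |
  "C142 \<cdot> y = (case y of I \<Rightarrow> C142 | V12 \<Rightarrow> C243 | V13 \<Rightarrow> C134 | V14 \<Rightarrow> C123 | C123 \<Rightarrow> C234 | C132 \<Rightarrow> V13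
     | C124 \<Rightarrow> I | C142 \<Rightarrow> C124 | C134 \<Rightarrow> C132 | C143 \<Rightarrow> V12 | C234 \<Rightarrow> V14 | C243 \<Rightarrow> C143)" |
  "C134 \<cdot> y = (case y of I \<Rightarrow> C134 | V12 \<Rightarrow> C123 | V13 \<Rightarrow> C142 | V14 \<Rightarrow> C243 | C123 \<Rightarrow> C124 | C132 \<Rightarrow> V14
     | C124 \<Rightarrow> V12 | C142 \<Rightarrow> C234 | C134 \<Rightarrow> C143 | C143 \<Rightarrow> I | C234 \<Rightarrow> V13 | C243 \<Rightarrow> C132)" |
  "C143 \<cdot> y = (case y of I \<Rightarrow> C143 | V12 \<Rightarrow> C124 | V13 \<Rightarrow> C234 | V14 \<Rightarrow> C132 | C123 \<Rightarrow> V12 | C132 \<Rightarrow> C243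
     | C124 \<Rightarrow> C123 | C142 \<Rightarrow> V13 | C134 \<Rightarrow> I | C143 \<Rightarrow> C134 | C234 \<Rightarrow> C142 | C243 \<Rightarrow> V14)" |
  "C234 \<cdot> y = (case y of I \<Rightarrow> C234 | V12 \<Rightarrow> C132 | V13 \<Rightarrow> C143 | V14 \<Rightarrow> C124 | C123 \<Rightarrow> V13 | C132 \<Rightarrow> C142
     | C124 \<Rightarrow> C134 | C142 \<Rightarrow> V12 | C134 \<Rightarrow> V14 | C143 \<Rightarrow> C123 | C234 \<Rightarrow> C243 | C243 \<Rightarrow> I)" |
  "C243 \<cdot> y = (case y of I \<Rightarrow> C243 | V12 \<Rightarrow> C142 | V13 \<Rightarrow> C123 | V14 \<Rightarrow> C134 | C123 \<Rightarrow> C143 | C132 \<Rightarrow> V12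
     | C124 \<Rightarrow> V14 | C142 \<Rightarrow> C132 | C134 \<Rightarrow> C124 | C143 \<Rightarrow> V13 | C234 \<Rightarrow> I | C243 \<Rightarrow> C234)"

lemma UNIV_a4: "(UNIV :: a4 set) = {I, V12, V13, V14, C123, C132, C124, C142, C134, C143, C234, C243}"
  using a4.exhaust by auto

lemma card_UNIV_a4: "card (UNIV :: a4 set) = 12"
  by (simp add: UNIV_a4)

lemma a4_perm_permutes: "a4_perm x permutes {1..4}"
  by (cases x) (auto intro!: permutes_compose permutes_swap_id permutes_id)

lemma a4_perm_even: "evenperm (a4_perm x)"
  by (cases x) (simp_all add: evenperm_comp permutation_swap_id evenperm_swap)

lemma a4_perm_in_alt_group: "a4_perm x \<in> carrier (alt_group 4)"
  using a4_perm_permutes a4_perm_even by (simp add: alt_group_carrier)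

lemma a4_perm_mult: "a4_perm (x \<cdot> y) = a4_perm x \<circ> a4_perm y"
proof (rule permutes_eqI[OF a4_perm_permutes permutes_compose[OF a4_perm_permutes a4_perm_permutes]])
  fix i :: nat assume "i \<in> {1..4}"
  then have "i = 1 \<or> i = 2 \<or> i = 3 \<or> i = 4" by auto
  then show "a4_perm (x \<cdot> y) i = (a4_perm x \<circ> a4_perm y) i"
    by (cases x; cases y) (auto simp: transpose_def)
qed

lemma inj_a4_perm: "inj a4_perm"
proof
  fix x y assume "a4_perm x = a4_perm y"
  then have "a4_perm x 1 = a4_perm y 1 \<and> a4_perm x 2 = a4_perm y 2 \<and> a4_perm x 3 = a4_perm y 3"
    by simp
  then show "x = y" by (cases x; cases y) (simp_all add: transpose_def)
qed

lemma range_a4_perm: "range a4_perm = carrier (alt_group 4)"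
proof (rule card_subset_eq)
  have "2 * card (carrier (alt_group 4)) = fact 4" by (rule alt_group_card_carrier) simp
  then have "card (carrier (alt_group 4)) = 12" by (simp add: fact_numeral)
  then show "finite (carrier (alt_group 4))" by (intro card_ge_0_finite) simp
  show "card (range a4_perm) = card (carrier (alt_group 4))"
    using \<open>card (carrier (alt_group 4)) = 12\<close> card_image[OF inj_a4_perm] card_UNIV_a4 by simp
qed (auto intro: a4_perm_in_alt_group)

lemma a4_square_or_cube: "x \<cdot> x = I \<or> x \<cdot> x \<cdot> x = I"
  by (cases x) simp_all

lemma a4_involution_products_not_distinct:
  assumes "x \<cdot> x = I" "y \<cdot> y = I"
  shows "\<not> distinct [I, x, y, x \<cdot> y, u, x \<cdot> u, u \<cdot> y, x \<cdot> u \<cdot> y,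
                      v, x \<cdot> v, v \<cdot> y, x \<cdot> v \<cdot> y]"
  using assms by (cases x; simp; cases y; simp; cases u; simp; cases v; simp)

lemma alt_group_4_square_or_cube:
  assumes "g \<in> carrier (alt_group 4)"
  shows "g \<circ> g = id \<or> g \<circ> g \<circ> g = id"
proof -
  from assms obtain x where "g = a4_perm x"
    unfolding range_a4_perm [symmetric] by blast
  then show ?thesis
    using a4_square_or_cube [of x] by (auto simp flip: a4_perm_mult)
qed

lemma alt_group_4_involution_products_not_distinct:
  assumes "x \<in> carrier (alt_group 4)" "y \<in> carrier (alt_group 4)"
    "u \<in> carrier (alt_group 4)" "v \<in> carrier (alt_group 4)"
    and "x \<circ> x = id" "y \<circ> y = id"
  shows "\<not> distinct [id, x, y, x \<circ> y, u, x \<circ> u, u \<circ> y, x \<circ> u \<circ> y,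
                      v, x \<circ> v, v \<circ> y, x \<circ> v \<circ> y]"
proof
  assume dist: "distinct [id, x, y, x \<circ> y, u, x \<circ> u, u \<circ> y, x \<circ> u \<circ> y,
                          v, x \<circ> v, v \<circ> y, x \<circ> v \<circ> y]"
  from assms(1-4) obtain x' y' u' v' where
    perms: "x = a4_perm x'" "y = a4_perm y'" "u = a4_perm u'" "v = a4_perm v'"
    unfolding range_a4_perm [symmetric] by blast
  have "a4_perm (x' \<cdot> x') = a4_perm I" "a4_perm (y' \<cdot> y') = a4_perm I"
    using assms(5,6) perms by (simp_all add: a4_perm_mult)
  then have "x' \<cdot> x' = I" "y' \<cdot> y' = I"
    by (simp_all only: inj_eq [OF inj_a4_perm])
  moreover have "[id, x, y, x \<circ> y, u, x \<circ> u, u \<circ> y, x \<circ> u \<circ> y, v, x \<circ> v, v \<circ> y, x \<circ> v \<circ> y] =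
      map a4_perm [I, x', y', x' \<cdot> y', u', x' \<cdot> u', u' \<cdot> y', x' \<cdot> u' \<cdot> y',
                   v', x' \<cdot> v', v' \<cdot> y', x' \<cdot> v' \<cdot> y']"
    using perms by (simp add: a4_perm_mult)
  with dist have "distinct [I, x', y', x' \<cdot> y', u', x' \<cdot> u', u' \<cdot> y', x' \<cdot> u' \<cdot> y',
                            v', x' \<cdot> v', v' \<cdot> y', x' \<cdot> v' \<cdot> y']"
    by (metis distinct_map)
  ultimately show False
    using a4_involution_products_not_distinct by blast
qed

theorem proposition1p3:
  shows "\<not> (\<exists>A1 A2 A3.
           A1 \<subseteq> carrier (alt_group 4) \<and> A2 \<subseteq> carrier (alt_group 4) \<and>
           A3 \<subseteq> carrier (alt_group 4) \<and>
           card A1 = 2 \<and> card A2 = 3 \<and> card A3 = 2 \<and>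
           bij_betw (\<lambda>(a1, a2, a3). a1 \<otimes>\<^bsub>alt_group 4\<^esub> a2 \<otimes>\<^bsub>alt_group 4\<^esub> a3)
             (A1 \<times> A2 \<times> A3) (carrier (alt_group 4)))"
proof
  assume "\<exists>A1 A2 A3.
           A1 \<subseteq> carrier (alt_group 4) \<and> A2 \<subseteq> carrier (alt_group 4) \<and>
           A3 \<subseteq> carrier (alt_group 4) \<and>
           card A1 = 2 \<and> card A2 = 3 \<and> card A3 = 2 \<and>
           bij_betw (\<lambda>(a1, a2, a3). a1 \<otimes>\<^bsub>alt_group 4\<^esub> a2 \<otimes>\<^bsub>alt_group 4\<^esub> a3)
             (A1 \<times> A2 \<times> A3) (carrier (alt_group 4))"
  then obtain A1 A2 A3 where "exact_factorization (alt_group 4) A1 A2 A3"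
    and "card A1 = 2" "card A2 = 3" "card A3 = 2"
    unfolding exact_factorization_def by blast
  moreover note alt_group_4_square_or_cube
  ultimately obtain x y u v where
    "x \<in> carrier (alt_group 4)" "y \<in> carrier (alt_group 4)"
    "u \<in> carrier (alt_group 4)" "v \<in> carrier (alt_group 4)"
    "x \<circ> x = id" "y \<circ> y = id"
    "distinct [id, x, y, x \<circ> y, u, x \<circ> u, u \<circ> y, x \<circ> u \<circ> y, v, x \<circ> v, v \<circ> y, x \<circ> v \<circ> y]"
    by (rule group.exact_factorization_2_3_2_involutions [OF alt_group_is_group,
          unfolded alt_group_mult alt_group_one])
  then show False
    using alt_group_4_involution_products_not_distinct by blast
qed

end
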